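(* Assume the set $\mathcal{E}_1=\{u_1<u_2<\cdots\}$ and $\mathcal{E}_3=\{v_1<v_2<\cdots\}$ are both infinite and that $n_\ell>64$ for all $\ell$. Let $k\ge2$ be an integer. For $1\le m\le 8k-4$ write $m=8q+r$ where $0\le q\le k-2$, $1\le r\le 8$ if $m\le 8k-8$, and $q=k-1$, $1\le r\le 4$ if $8k-7\le m\le 8k-4$. Then there exist strictly increasing sequences of nonnegative integers $x_0<x_1<\dots<x_{8k-4}$ and $y_0<y_1<\dots<y_{8k-4}$ with $x_0=y_0=0$ such that every integer $X$ satisfying the system of congruences \[ X\equiv 0\pmod 4,\qquad X+m\equiv 0\ \Bigl(\bmod\ \prod_{x_{m-1}<n\le x_m}u_n\cdot\prod_{y_{m-1}<n\le y_m}v_n\Bigr)\quad(1\le m\le 8k-4) \] has the following two properties: (C1) for $1\le m\le 8k-8$, $X+m$ is divisible by exactly $2^q$ of the integers $u_n$ with $n\le x_m$ and by exactly $2^q$ of the integers $v_n$ with $n\le y_m$; (C2) for $8k-7\le m\le 8k-4$ (so $m=8(k-1)+r$), $X+m$ is divisible by exactly $k^r2^{k-1}$ of the integers $u_n$ with $n\le x_m$ and by exactly $2^{k-1}$ of the integers $v_n$ with $n\le y_m$.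
   Context: $\{n_\ell\}_{\ell\ge1}$ is a strictly increasing sequence of positive odd integers, any two distinct terms of which are coprime, with $\sum_\ell 1/n_\ell<\infty$. $\mathcal{E}_1$ (resp. $\mathcal{E}_3$) is the set of terms $n_\ell$ congruent to $1$ (resp. $3$) modulo $4$, enumerated increasingly as $u_1<u_2<\cdots$ (resp. $v_1<v_2<\cdots$). *)

theory Defs
  imports "HOL-Analysis.Analysis" "HOL-Library.Infinite_Set"
begin

text \<open>The sequence n_l is indexed by l >= 1 (the value n 0 is irrelevant).\<close>

definition E1 :: "(nat \<Rightarrow> nat) \<Rightarrow> nat set" where
  "E1 n = {n l | l. l \<ge> 1 \<and> n l mod 4 = 1}"

definition E3 :: "(nat \<Rightarrow> nat) \<Rightarrow> nat set" where
  "E3 n = {n l | l. l \<ge> 1 \<and> n l mod 4 = 3}"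

text \<open>Increasing enumerations u_1 < u_2 < ... and v_1 < v_2 < ... (indices start at 1).\<close>

definition useq :: "(nat \<Rightarrow> nat) \<Rightarrow> nat \<Rightarrow> nat" where
  "useq n j = enumerate (E1 n) (j - 1)"

definition vseq :: "(nat \<Rightarrow> nat) \<Rightarrow> nat \<Rightarrow> nat" where
  "vseq n j = enumerate (E3 n) (j - 1)"

end

theory Submission
  imports Defs
begin

text \<open>The blocks are chosen one after the other, separately for the \<open>u\<close>'s and the \<open>v\<close>'s.
  If \<open>X\<close> satisfies the congruences of the earlier blocks, a modulus \<open>w j\<close> from block
  \<open>i < m\<close> divides \<open>X + m\<close> exactly when it divides \<open>m - i\<close>. So the number of these
  "carried" divisors of \<open>X + m\<close> depends only on the blocks already chosen, and block \<open>m\<close>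
  is made just long enough to bring the count up to the prescribed value. As \<open>w j \<ge> 64 + j\<close>,
  a carried modulus \<open>w j \<le> m - 1\<close> has \<open>j \<le> m - 65\<close>, which is less than the smallest
  prescribed count \<open>2 ^ ((m - 1) div 8)\<close>; hence no block is empty.\<close>

lemma linear_less_pow2: "6 \<le> q \<Longrightarrow> 8 * q < (2::nat) ^ q"
  by (induction q rule: dec_induct) simp_all

lemma diff_65_less_pow2_div8: "(m::nat) - 65 < 2 ^ ((m - 1) div 8)"
proof (cases "m \<le> 65")
  case False
  define q where "q = (m - 1) div 8"
  have "8 \<le> q" "m \<le> 8 * q + 8"
    using False unfolding q_def by linarith+
  then show ?thesis using linear_less_pow2[of q] unfolding q_def by linarith
qed simp

lemma enumerate_ge_add:
  assumes "infinite S" and "\<And>a. a \<in> S \<Longrightarrow> c \<le> a"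
  shows "c + i \<le> enumerate S i"
proof (induction i)
  case 0
  show ?case using assms enumerate_in_set[OF assms(1)] by simp
next
  case (Suc i)
  then show ?case using enumerate_step[OF assms(1), of i] by simp
qed

lemma of_nat_prod_mult_prod_dvdD:
  fixes z :: int
  assumes "int ((\<Prod>i\<in>A. f i) * (\<Prod>i\<in>B. g i)) dvd z" "finite A" "finite B"
  shows "\<forall>a\<in>A. int (f a) dvd z" "\<forall>b\<in>B. int (g b) dvd z"
proof -
  have "int (\<Prod>i\<in>A. f i) dvd z" "int (\<Prod>i\<in>B. g i) dvd z"
    using assms(1) unfolding of_nat_mult by (meson dvd_mult_left dvd_mult_right)+
  then show "\<forall>a\<in>A. int (f a) dvd z" "\<forall>b\<in>B. int (g b) dvd z"
    using assms(2,3) by (meson dvd_prodI dvd_trans of_nat_dvd_iff)+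
qed

lemma block_index_exists:
  fixes x :: "nat \<Rightarrow> nat"
  assumes "x 0 = 0" "1 \<le> j" "j \<le> x p"
  shows "\<exists>i\<in>{1..p}. x (i - 1) < j \<and> j \<le> x i"
  using assms(3)
proof (induction p)
  case 0
  then show ?case using assms(1,2) by simp
next
  case (Suc p)
  show ?case
  proof (cases "j \<le> x p")
    case True
    then show ?thesis using Suc.IH by force
  next
    case False
    then show ?thesis using Suc.prems by (intro bexI[of _ "Suc p"]) auto
  qed
qed

definition carried :: "(nat \<Rightarrow> nat) \<Rightarrow> (nat \<Rightarrow> nat) \<Rightarrow> nat \<Rightarrow> nat set" where
  "carried w x m = {j \<in> {1..x (m - 1)}.
     \<exists>i\<in>{1..m - 1}. x (i - 1) < j \<and> j \<le> x i \<and> int (w j) dvd int m - int i}"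

lemma carried_cong:
  assumes "\<And>i. i < m \<Longrightarrow> x i = x' i"
  shows "carried w x m = carried w x' m"
proof -
  have "x (i - 1) = x' (i - 1) \<and> x i = x' i" if "i \<in> {1..m - 1}" for i
    using that assms by auto
  moreover have "x (m - 1) = x' (m - 1)" if "m \<ge> 1"
    using that assms by simp
  ultimately show ?thesis
    unfolding carried_def by (cases "m = 0") (auto cong: conj_cong)
qed

lemma card_carried_le:
  assumes "\<And>j. 1 \<le> j \<Longrightarrow> c + j \<le> w j"
  shows "card (carried w x m) \<le> m - Suc c"
proof -
  have "carried w x m \<subseteq> {1..m - Suc c}"
  proof
    fix j assume "j \<in> carried w x m"
    then obtain i where i: "i \<in> {1..m - 1}" "int (w j) dvd int m - int i" and "1 \<le> j"
      unfolding carried_def by auto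
    then have "int (w j) \<le> int m - int i" by (intro zdvd_imp_le) auto
    then show "j \<in> {1..m - Suc c}" using assms[OF \<open>1 \<le> j\<close>] i(1) \<open>1 \<le> j\<close> by auto
  qed
  then show ?thesis using card_mono[of "{1..m - Suc c}"] by fastforce
qed

lemma divisor_indices_eq_block_Un_carried:
  fixes x w :: "nat \<Rightarrow> nat" and X :: int
  assumes x0: "x 0 = 0" and m: "m \<in> {1..M}" and mono: "x (m - 1) \<le> x m"
    and blocks: "\<forall>i\<in>{1..M}. \<forall>j\<in>{x (i - 1)<..x i}. int (w j) dvd X + int i"
  shows "{j \<in> {1..x m}. int (w j) dvd X + int m} = {x (m - 1)<..x m} \<union> carried w x m"
proof (intro equalityI subsetI)
  fix j assume j: "j \<in> {j \<in> {1..x m}. int (w j) dvd X + int m}"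
  show "j \<in> {x (m - 1)<..x m} \<union> carried w x m"
  proof (cases "x (m - 1) < j")
    case False
    then have "1 \<le> j" "j \<le> x (m - 1)" using j by auto
    then obtain i where i: "i \<in> {1..m - 1}" "x (i - 1) < j" "j \<le> x i"
      using block_index_exists[of x j "m - 1", OF x0] by blast
    then have "int (w j) dvd X + int i" using blocks m by auto
    with j have "int (w j) dvd (X + int m) - (X + int i)" by (intro dvd_diff) auto
    then show ?thesis
      unfolding carried_def using i \<open>1 \<le> j\<close> \<open>j \<le> x (m - 1)\<close> by auto
  qed (use j in auto)
next
  fix j assume j: "j \<in> {x (m - 1)<..x m} \<union> carried w x m"
  show "j \<in> {j \<in> {1..x m}. int (w j) dvd X + int m}"
  proof (cases "j \<in> {x (m - 1)<..x m}")
    case False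
    then obtain i where i: "i \<in> {1..m - 1}" "x (i - 1) < j" "j \<le> x i"
        "int (w j) dvd int m - int i" and "1 \<le> j" "j \<le> x (m - 1)"
      using j unfolding carried_def by auto
    then have "int (w j) dvd X + int i" using blocks m by auto
    then have "int (w j) dvd (X + int i) + (int m - int i)" using i(4) by (rule dvd_add)
    then show ?thesis using \<open>1 \<le> j\<close> \<open>j \<le> x (m - 1)\<close> mono by simp
  qed (use blocks m in auto)
qed

lemma block_ends_recursion:
  obtains x :: "nat \<Rightarrow> nat" where "x 0 = 0"
    "\<And>m. 1 \<le> m \<Longrightarrow> x m = x (m - 1) + (T m - card (carried w x m))"
proof -
  define F where "F x m = (if m = 0 then 0 else x (m - 1) + (T m - card (carried w x m)))"
    for x :: "nat \<Rightarrow> nat" and m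
  have "adm_wf {(i, m). i < m} F"
    unfolding adm_wf_def
  proof (intro allI impI)
    fix f g :: "nat \<Rightarrow> nat" and m
    assume "\<forall>i. (i, m) \<in> {(i, m). i < m} \<longrightarrow> f i = g i"
    then show "F f m = F g m"
      unfolding F_def using carried_cong[of m f g w] by auto
  qed
  then have "wfrec {(i, m). i < m} F m = F (wfrec {(i, m). i < m} F) m" for m
    using wfrec_fixpoint[OF wf_less] by metis
  then show thesis
    by (intro that[of "wfrec {(i, m). i < m} F"]) (simp_all add: F_def)
qed

theorem block_sequence_with_divisor_counts:
  fixes w T :: "nat \<Rightarrow> nat"
  assumes w_ge: "\<And>j. 1 \<le> j \<Longrightarrow> c + j \<le> w j"
    and T_gt: "\<And>m. m \<in> {1..M} \<Longrightarrow> m - Suc c < T m"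
  obtains x where "x 0 = 0" "\<forall>i<M. x i < x (Suc i)"
    "\<And>X::int. \<forall>m\<in>{1..M}. \<forall>j\<in>{x (m - 1)<..x m}. int (w j) dvd X + int m \<Longrightarrow>
      \<forall>m\<in>{1..M}. card {j \<in> {1..x m}. int (w j) dvd X + int m} = T m"
proof -
  obtain x where x0: "x 0 = 0"
    and x_step: "\<And>m. 1 \<le> m \<Longrightarrow> x m = x (m - 1) + (T m - card (carried w x m))"
    using block_ends_recursion[where T = T and w = w] by blast
  have card_less: "card (carried w x m) < T m" if "m \<in> {1..M}" for m
  proof -
    have "card (carried w x m) \<le> m - Suc c" by (rule card_carried_le[OF w_ge])
    then show ?thesis using T_gt[OF that] by linarith
  qed
  have mono: "x (m - 1) < x m" if "m \<in> {1..M}" for m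
    using x_step[of m] card_less[OF that] that by simp
  show thesis
  proof (rule that[of x]; (intro allI impI ballI)?)
    show "x i < x (Suc i)" if "i < M" for i
      using mono[of "Suc i"] that by simp
  next
    fix X :: int and m
    assume blocks: "\<forall>m\<in>{1..M}. \<forall>j\<in>{x (m - 1)<..x m}. int (w j) dvd X + int m"
      and m: "m \<in> {1..M}"
    have "finite (carried w x m)" "{x (m - 1)<..x m} \<inter> carried w x m = {}"
      unfolding carried_def by auto
    then have "card ({x (m - 1)<..x m} \<union> carried w x m) = (x m - x (m - 1)) + card (carried w x m)"
      by (simp add: card_Un_disjoint)
    also have "\<dots> = T m" using x_step[of m] card_less[OF m] m by simp
    finally show "card {j \<in> {1..x m}. int (w j) dvd X + int m} = T m"
      using divisor_indices_eq_block_Un_carried[OF x0 m _ blocks] mono[OF m] by simp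
  qed (fact x0)
qed

theorem two_block_sequences_with_divisor_counts:
  fixes u v U V :: "nat \<Rightarrow> nat"
  assumes u_ge: "\<And>j. 1 \<le> j \<Longrightarrow> c + j \<le> u j" and v_ge: "\<And>j. 1 \<le> j \<Longrightarrow> c + j \<le> v j"
    and U_gt: "\<And>m. m \<in> {1..M} \<Longrightarrow> m - Suc c < U m"
    and V_gt: "\<And>m. m \<in> {1..M} \<Longrightarrow> m - Suc c < V m"
  obtains x y where "x 0 = 0" "y 0 = 0" "\<forall>i<M. x i < x (Suc i) \<and> y i < y (Suc i)"
    "\<And>X::int. \<forall>m\<in>{1..M}.
        int ((\<Prod>j\<in>{x (m - 1)<..x m}. u j) * (\<Prod>j\<in>{y (m - 1)<..y m}. v j)) dvd X + int m \<Longrightarrow>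
      \<forall>m\<in>{1..M}. card {j \<in> {1..x m}. int (u j) dvd X + int m} = U m \<and>
        card {j \<in> {1..y m}. int (v j) dvd X + int m} = V m"
proof -
  obtain x where "x 0 = 0" "\<forall>i<M. x i < x (Suc i)" and x_counts:
    "\<And>X::int. \<forall>m\<in>{1..M}. \<forall>j\<in>{x (m - 1)<..x m}. int (u j) dvd X + int m \<Longrightarrow>
      \<forall>m\<in>{1..M}. card {j \<in> {1..x m}. int (u j) dvd X + int m} = U m"
    by (rule block_sequence_with_divisor_counts[where w = u and T = U and c = c and M = M])
      (use u_ge U_gt in blast)+
  obtain y where "y 0 = 0" "\<forall>i<M. y i < y (Suc i)" and y_counts:
    "\<And>X::int. \<forall>m\<in>{1..M}. \<forall>j\<in>{y (m - 1)<..y m}. int (v j) dvd X + int m \<Longrightarrow>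
      \<forall>m\<in>{1..M}. card {j \<in> {1..y m}. int (v j) dvd X + int m} = V m"
    by (rule block_sequence_with_divisor_counts[where w = v and T = V and c = c and M = M])
      (use v_ge V_gt in blast)+
  show thesis
  proof (rule that[of x y])
    fix X :: int
    assume H: "\<forall>m\<in>{1..M}.
      int ((\<Prod>j\<in>{x (m - 1)<..x m}. u j) * (\<Prod>j\<in>{y (m - 1)<..y m}. v j)) dvd X + int m"
    have "\<forall>j\<in>{x (m - 1)<..x m}. int (u j) dvd X + int m"
      and "\<forall>j\<in>{y (m - 1)<..y m}. int (v j) dvd X + int m" if "m \<in> {1..M}" for m
      using of_nat_prod_mult_prod_dvdD[OF bspec[OF H that] finite_greaterThanAtMost
          finite_greaterThanAtMost] .
    then show "\<forall>m\<in>{1..M}. card {j \<in> {1..x m}. int (u j) dvd X + int m} = U m \<and>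
        card {j \<in> {1..y m}. int (v j) dvd X + int m} = V m"
      using x_counts y_counts by blast
  qed (use \<open>x 0 = 0\<close> \<open>y 0 = 0\<close> \<open>\<forall>i<M. x i < x (Suc i)\<close> \<open>\<forall>i<M. y i < y (Suc i)\<close>
      in auto)
qed

lemma useq_ge_add:
  assumes "infinite (E1 n)" "\<And>l. 1 \<le> l \<Longrightarrow> c < n l" "1 \<le> j"
  shows "c + j \<le> useq n j"
  using enumerate_ge_add[OF assms(1), of "Suc c" "j - 1"] assms(2,3)
  unfolding useq_def E1_def by fastforce

lemma vseq_ge_add:
  assumes "infinite (E3 n)" "\<And>l. 1 \<le> l \<Longrightarrow> c < n l" "1 \<le> j"
  shows "c + j \<le> vseq n j"
  using enumerate_ge_add[OF assms(1), of "Suc c" "j - 1"] assms(2,3)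
  unfolding vseq_def E3_def by fastforce

definition u_target :: "nat \<Rightarrow> nat \<Rightarrow> nat" where
  "u_target k m = (if m \<le> 8*k-8 then 2 ^ ((m - 1) div 8) else k ^ (m - 8*(k-1)) * 2 ^ (k-1))"

definition v_target :: "nat \<Rightarrow> nat \<Rightarrow> nat" where
  "v_target k m = (if m \<le> 8*k-8 then 2 ^ ((m - 1) div 8) else 2 ^ (k-1))"

lemma pow2_div8_le_targets:
  assumes "2 \<le> k" "m \<le> 8*k-4"
  shows "2 ^ ((m - 1) div 8) \<le> u_target k m" "2 ^ ((m - 1) div 8) \<le> v_target k m"
proof -
  have "(m - 1) div 8 = k - 1" if "\<not> m \<le> 8*k-8"
    using that assms by (intro div_nat_eqI) auto
  then show "2 ^ ((m - 1) div 8) \<le> u_target k m" "2 ^ ((m - 1) div 8) \<le> v_target k m"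
    using assms(1) by (auto simp: u_target_def v_target_def)
qed

lemma targets_on_ranges:
  assumes "2 \<le> k" and "\<And>m. m \<in> {1..8*k-4} \<Longrightarrow> a m = u_target k m \<and> b m = v_target k m"
  shows "(\<forall>m\<in>{1..8*k-8}. a m = 2 ^ ((m - 1) div 8) \<and> b m = 2 ^ ((m - 1) div 8)) \<and>
    (\<forall>m\<in>{8*k-7..8*k-4}. a m = k ^ (m - 8*(k-1)) * 2 ^ (k-1) \<and> b m = 2 ^ (k-1))"
proof (intro conjI ballI)
  fix m assume "m \<in> {1..8*k-8}"
  moreover have "m \<in> {1..8*k-4}" using calculation by auto
  ultimately show "a m = 2 ^ ((m - 1) div 8)" "b m = 2 ^ ((m - 1) div 8)"
    using assms(2)[of m] by (simp_all add: u_target_def v_target_def)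
next
  fix m assume "m \<in> {8*k-7..8*k-4}"
  moreover have "\<not> m \<le> 8*k-8" "m \<in> {1..8*k-4}" using calculation assms(1) by auto
  ultimately show "a m = k ^ (m - 8*(k-1)) * 2 ^ (k-1)" "b m = 2 ^ (k-1)"
    using assms(2)[of m] by (simp_all add: u_target_def v_target_def)
qed

theorem lemma1:
  fixes n :: "nat \<Rightarrow> nat" and k :: nat
  assumes incr: "\<And>l. l \<ge> 1 \<Longrightarrow> n l < n (Suc l)"
    and pos: "\<And>l. l \<ge> 1 \<Longrightarrow> n l > 0"
    and odd: "\<And>l. l \<ge> 1 \<Longrightarrow> odd (n l)"
    and copr: "\<And>l l'. l \<ge> 1 \<Longrightarrow> l' \<ge> 1 \<Longrightarrow> l \<noteq> l' \<Longrightarrow> coprime (n l) (n l')"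
    and summ: "summable (\<lambda>l. 1 / real (n (Suc l)))"
    and inf1: "infinite (E1 n)"
    and inf3: "infinite (E3 n)"
    and big: "\<And>l. l \<ge> 1 \<Longrightarrow> n l > 64"
    and k2: "k \<ge> 2"
  shows "\<exists>x y :: nat \<Rightarrow> nat.
    x 0 = 0 \<and> y 0 = 0 \<and>
    (\<forall>i < 8*k-4. x i < x (Suc i) \<and> y i < y (Suc i)) \<and>
    (\<forall>X :: int.
       (X mod 4 = 0 \<and>
        (\<forall>m \<in> {1..8*k-4}.
           int ((\<Prod>j\<in>{x (m-1)<..x m}. useq n j) * (\<Prod>j\<in>{y (m-1)<..y m}. vseq n j))
             dvd X + int m))
       \<longrightarrow>
       (\<forall>m \<in> {1..8*k-8}.
          card {j \<in> {1..x m}. int (useq n j) dvd X + int m} = 2 ^ ((m - 1) div 8) \<and>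
          card {j \<in> {1..y m}. int (vseq n j) dvd X + int m} = 2 ^ ((m - 1) div 8)) \<and>
       (\<forall>m \<in> {8*k-7..8*k-4}.
          card {j \<in> {1..x m}. int (useq n j) dvd X + int m} = k ^ (m - 8*(k-1)) * 2 ^ (k-1) \<and>
          card {j \<in> {1..y m}. int (vseq n j) dvd X + int m} = 2 ^ (k-1)))"
proof -
  have targets_gt: "m - Suc 64 < u_target k m" "m - Suc 64 < v_target k m" if "m \<in> {1..8*k-4}" for m
    using diff_65_less_pow2_div8[of m] pow2_div8_le_targets[OF k2, of m] that by fastforce+
  obtain x y where x0: "x 0 = 0" and y0: "y 0 = 0"
    and mono: "\<forall>i<8*k-4. x i < x (Suc i) \<and> y i < y (Suc i)"
    and counts: "\<And>X::int. \<forall>m\<in>{1..8*k-4}. int ((\<Prod>j\<in>{x (m - 1)<..x m}. useq n j) *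
        (\<Prod>j\<in>{y (m - 1)<..y m}. vseq n j)) dvd X + int m \<Longrightarrow>
      \<forall>m\<in>{1..8*k-4}. card {j \<in> {1..x m}. int (useq n j) dvd X + int m} = u_target k m \<and>
        card {j \<in> {1..y m}. int (vseq n j) dvd X + int m} = v_target k m"
    by (rule two_block_sequences_with_divisor_counts[where c = 64 and M = "8*k-4"])
      (rule useq_ge_add[OF inf1 big] vseq_ge_add[OF inf3 big] targets_gt that; assumption)+
  show ?thesis
    using x0 y0 mono
    by (intro exI[of _ x, OF exI[of _ y]] targets_on_ranges[OF k2] conjI allI impI)
      (blast dest: counts)+
qed

end
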